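(* Let $\{(\mathbf{x}^{(i)},y^{(i)})\}_{i=1}^n$ with $\mathbf{x}^{(i)}\in\mathbb{R}^d$, $y^{(i)}\in\{-1,1\}$, $\|\mathbf{x}^{(i)}\|_2\le1$, and suppose there is $\mathbf{w}^*\in\mathbb{R}^d$ with $\|\mathbf{w}^*\|_2=1$ and $\min_{i\in[n]}y^{(i)}\mathbf{x}^{(i)\top}\mathbf{w}^*=\gamma>0$. Let $A\in\mathbb{R}^{n\times d}$ have $i$-th row $y^{(i)}\mathbf{x}^{(i)\top}$, let $\alpha_t=t$, $g(\mathbf{w},\mathbf{p})=\mathbf{p}^{\top}A\mathbf{w}-\tfrac12\|\mathbf{w}\|_2^2$, $\mathbf{p}_0=\tfrac{\mathbf{1}}{n}$, and for $j\ge0$ let $h_j(\mathbf{w})=-g(\mathbf{w},\mathbf{p}_j)$, $\ell_j(\mathbf{p})=g(\mathbf{w}_j,\mathbf{p})$. For $t=1,\dots,T$ define $\mathbf{w}_t=\arg\min_{\mathbf{w}\in\mathbb{R}^d}\sum_{j=1}^{t-1}\alpha_jh_j(\mathbf{w})+\alpha_th_{t-1}(\mathbf{w})$, and then $\mathbf{p}_t=\arg\min_{\mathbf{p}\in\Delta^n}\tfrac14\sum_{s=1}^{t}\alpha_s\ell_s(\mathbf{p})+D_E(\mathbf{p},\tfrac{\mathbf{1}}{n})$, and let $\overline{\mathbf{w}}_T=\frac{\sum_{t=1}^T\alpha_t\mathbf{w}_t}{\sum_{t=1}^T\alpha_t}$. Define the weighted regrets $R^{\mathbf{w}}=\sum_{t=1}^T\alpha_th_t(\mathbf{w}_t)-\min_{\mathbf{w}\in\mathbb{R}^d}\sum_{t=1}^T\alpha_th_t(\mathbf{w})$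 and $R^{\mathbf{p}}=\sum_{t=1}^T\alpha_t\ell_t(\mathbf{p}_t)-\min_{\mathbf{p}\in\Delta^n}\sum_{t=1}^T\alpha_t\ell_t(\mathbf{p})$. Then $R^{\mathbf{w}}\le 2\sum_{t=1}^T\|\mathbf{p}_t-\mathbf{p}_{t-1}\|_1^2$ and $R^{\mathbf{p}}\le 4\log n-2\sum_{t=1}^T\|\mathbf{p}_t-\mathbf{p}_{t-1}\|_1^2$. Moreover, there is a universal constant $C>0$ such that whenever $T\ge C\sqrt{\log n}/\gamma$, $\overline{\mathbf{w}}_T$ has non-negative margin, i.e. $\min_{i\in[n]}y^{(i)}\mathbf{x}^{(i)\top}\overline{\mathbf{w}}_T\ge0$.
   Context: $\Delta^n$ is the probability simplex in $\mathbb{R}^n$; $\mathbf{1}$ the all-ones vector; $D_E(\mathbf{p},\mathbf{q})=\sum_ip_i\log(p_i/q_i)$ is the Bregman divergence of the negative entropy $E(\mathbf{p})=\sum_ip_i\log p_i$ (the KL divergence). These dynamics are the game-theoretic form of the Smooth Perceptron of Soheili and Peña. *)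

theory Defs
  imports Complex_Main
begin

text \<open>Vectors in R^d are represented as functions nat => real; only the
coordinates k < d are relevant.  Data points are x i (i < n), labels y i.
Indices are 0-based: data index i ranges over {..<n}.\<close>

definition Rd :: "nat \<Rightarrow> (nat \<Rightarrow> real) set" where
  "Rd d = {w. \<forall>k\<ge>d. w k = 0}"

definition simplex :: "nat \<Rightarrow> (nat \<Rightarrow> real) set" where
  "simplex n = {p. (\<forall>i<n. 0 \<le> p i) \<and> (\<Sum>i<n. p i) = 1 \<and> (\<forall>i\<ge>n. p i = 0)}"

text \<open>KL divergence = Bregman divergence of negative entropy (0 log 0 = 0,
automatic since the summand is multiplied by p i).\<close>
definition KL :: "nat \<Rightarrow> (nat \<Rightarrow> real) \<Rightarrow> (nat \<Rightarrow> real) \<Rightarrow> real" where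
  "KL n p q = (\<Sum>i<n. p i * ln (p i / q i))"

definition unif :: "nat \<Rightarrow> nat \<Rightarrow> real" where
  "unif n = (\<lambda>i. if i < n then 1 / real n else 0)"

definition Amul :: "nat \<Rightarrow> (nat \<Rightarrow> nat \<Rightarrow> real) \<Rightarrow> (nat \<Rightarrow> real) \<Rightarrow> (nat \<Rightarrow> real) \<Rightarrow> nat \<Rightarrow> real" where
  "Amul d x y w i = y i * (\<Sum>k<d. x i k * w k)"

definition gfun :: "nat \<Rightarrow> nat \<Rightarrow> (nat \<Rightarrow> nat \<Rightarrow> real) \<Rightarrow> (nat \<Rightarrow> real)
                    \<Rightarrow> (nat \<Rightarrow> real) \<Rightarrow> (nat \<Rightarrow> real) \<Rightarrow> real" where
  "gfun n d x y w p = (\<Sum>i<n. p i * Amul d x y w i) - 1/2 * (\<Sum>k<d. (w k)^2)"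

definition alpha :: "nat \<Rightarrow> real" where
  "alpha t = real t"

definition w_step :: "nat \<Rightarrow> nat \<Rightarrow> (nat \<Rightarrow> nat \<Rightarrow> real) \<Rightarrow> (nat \<Rightarrow> real)
                      \<Rightarrow> (nat \<Rightarrow> nat \<Rightarrow> real) \<Rightarrow> nat \<Rightarrow> (nat \<Rightarrow> real)" where
  "w_step n d x y P t = arg_min
     (\<lambda>w. (\<Sum>j\<in>{1..<t}. alpha j * (- gfun n d x y w (P j))) + alpha t * (- gfun n d x y w (P (t - 1))))
     (\<lambda>w. w \<in> Rd d)"

definition p_step :: "nat \<Rightarrow> nat \<Rightarrow> (nat \<Rightarrow> nat \<Rightarrow> real) \<Rightarrow> (nat \<Rightarrow> real)
                      \<Rightarrow> (nat \<Rightarrow> nat \<Rightarrow> real) \<Rightarrow> nat \<Rightarrow> (nat \<Rightarrow> real)" where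
  "p_step n d x y W t = arg_min
     (\<lambda>p. 1/4 * (\<Sum>s\<in>{1..t}. alpha s * gfun n d x y (W s) p) + KL n p (unif n))
     (\<lambda>p. p \<in> simplex n)"

text \<open>History of the dynamics after t rounds: (W, P) with W j = w_j (1 \<le> j \<le> t)
  and P j = p_j (0 \<le> j \<le> t).\<close>
fun hist :: "nat \<Rightarrow> nat \<Rightarrow> (nat \<Rightarrow> nat \<Rightarrow> real) \<Rightarrow> (nat \<Rightarrow> real) \<Rightarrow> nat
              \<Rightarrow> (nat \<Rightarrow> nat \<Rightarrow> real) \<times> (nat \<Rightarrow> nat \<Rightarrow> real)" where
  "hist n d x y 0 = ((\<lambda>j k. 0), (\<lambda>j. unif n))"
| "hist n d x y (Suc t) =
     (let (W, P) = hist n d x y t;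
          W' = W(Suc t := w_step n d x y P (Suc t));
          P' = P(Suc t := p_step n d x y W' (Suc t))
      in (W', P'))"

definition wseq :: "nat \<Rightarrow> nat \<Rightarrow> (nat \<Rightarrow> nat \<Rightarrow> real) \<Rightarrow> (nat \<Rightarrow> real) \<Rightarrow> nat \<Rightarrow> (nat \<Rightarrow> real)" where
  "wseq n d x y t = fst (hist n d x y t) t"

definition pseq :: "nat \<Rightarrow> nat \<Rightarrow> (nat \<Rightarrow> nat \<Rightarrow> real) \<Rightarrow> (nat \<Rightarrow> real) \<Rightarrow> nat \<Rightarrow> (nat \<Rightarrow> real)" where
  "pseq n d x y t = snd (hist n d x y t) t"

definition wbar :: "nat \<Rightarrow> nat \<Rightarrow> (nat \<Rightarrow> nat \<Rightarrow> real) \<Rightarrow> (nat \<Rightarrow> real) \<Rightarrow> nat \<Rightarrow> (nat \<Rightarrow> real)" where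
  "wbar n d x y T = (\<lambda>k. (\<Sum>t\<in>{1..T}. alpha t * wseq n d x y t k) / (\<Sum>t\<in>{1..T}. alpha t))"

definition regret_w :: "nat \<Rightarrow> nat \<Rightarrow> (nat \<Rightarrow> nat \<Rightarrow> real) \<Rightarrow> (nat \<Rightarrow> real) \<Rightarrow> nat \<Rightarrow> real" where
  "regret_w n d x y T =
     (\<Sum>t\<in>{1..T}. alpha t * (- gfun n d x y (wseq n d x y t) (pseq n d x y t)))
     - (INF w\<in>Rd d. \<Sum>t\<in>{1..T}. alpha t * (- gfun n d x y w (pseq n d x y t)))"

definition regret_p :: "nat \<Rightarrow> nat \<Rightarrow> (nat \<Rightarrow> nat \<Rightarrow> real) \<Rightarrow> (nat \<Rightarrow> real) \<Rightarrow> nat \<Rightarrow> real" where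
  "regret_p n d x y T =
     (\<Sum>t\<in>{1..T}. alpha t * gfun n d x y (wseq n d x y t) (pseq n d x y t))
     - (INF p\<in>simplex n. \<Sum>t\<in>{1..T}. alpha t * gfun n d x y (wseq n d x y t) p)"

definition path_len :: "nat \<Rightarrow> nat \<Rightarrow> (nat \<Rightarrow> nat \<Rightarrow> real) \<Rightarrow> (nat \<Rightarrow> real) \<Rightarrow> nat \<Rightarrow> real" where
  "path_len n d x y T =
     (\<Sum>t\<in>{1..T}. (\<Sum>i<n. \<bar>pseq n d x y t i - pseq n d x y (t - 1) i\<bar>)^2)"

end

theory Submission
  imports Defs "HOL-Analysis.Convex"
begin

text \<open>Both players run follow-the-regularised-leader with closed-form iterates. The
  \<open>w\<close>-player's cumulative loss is the quadratic \<open>A\<^sub>t/2 |w|\<^sup>2 - \<langle>\<theta>\<^sub>t, w\<rangle>\<close> with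
  \<open>A\<^sub>t = t(t+1)/2\<close>, so its regret telescopes into per-round distances to the leader, each
  at most \<open>|p\<^sub>t - p\<^sub>t\<^sub>-\<^sub>1|\<^sub>1\<^sup>2\<close> because the rows of \<open>A\<close> lie in the unit ball. The
  \<open>p\<close>-player plays a Gibbs distribution; the three-point identity for KL turns its regret
  into \<open>4 ln n - 4 \<Sum> KL(p\<^sub>t, p\<^sub>t\<^sub>-\<^sub>1)\<close>, and Pinsker's inequality bounds the KL terms
  by the path length. Adding both regrets and comparing with \<open>\<gamma> w\<^sup>*\<close> and a vertex \<open>e\<^sub>i\<close>
  gives \<open>A\<^sub>T (\<gamma>\<^sup>2/2 - m\<^sub>i) \<le> 4 ln n\<close> for the margin \<open>m\<^sub>i\<close> of \<open>wbar\<^sub>T\<close> on example \<open>i\<close>,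
  which forces \<open>m\<^sub>i \<ge> 0\<close> once \<open>T \<ge> 4 \<surd>(ln n) / \<gamma>\<close>.\<close>

lemma Cauchy_Schwarz_weighted_sum:
  fixes a w :: "nat \<Rightarrow> real"
  assumes "\<And>i. i \<in> A \<Longrightarrow> w i \<ge> 0" and "\<And>i. i \<in> A \<Longrightarrow> w i = 0 \<Longrightarrow> a i = 0"
  shows "(\<Sum>i\<in>A. a i)\<^sup>2 \<le> (\<Sum>i\<in>A. w i) * (\<Sum>i\<in>A. (a i)\<^sup>2 / w i)"
proof -
  have "(\<Sum>i\<in>A. a i) = (\<Sum>i\<in>A. (a i / sqrt (w i)) * sqrt (w i))"
    and "(\<Sum>i\<in>A. w i) = (\<Sum>i\<in>A. (sqrt (w i))\<^sup>2)"
    and "(\<Sum>i\<in>A. (a i)\<^sup>2 / w i) = (\<Sum>i\<in>A. (a i / sqrt (w i))\<^sup>2)"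
    using assms by (auto intro!: sum.cong simp: power_divide)
  then show ?thesis
    using Cauchy_Schwarz_ineq_sum[of "\<lambda>i. a i / sqrt (w i)" "\<lambda>i. sqrt (w i)" A]
    by (simp add: mult.commute)
qed

text \<open>The sharp quadratic lower bound behind Pinsker's inequality; it is proved by
  showing that the difference, cleared of denominators, has derivative
  \<open>(4x + 4) ln x - 8x + 8\<close>, which changes sign only at \<open>x = 1\<close>.\<close>

lemma xlnx_quadratic_lower_bound:
  fixes x :: real
  assumes "x \<ge> 0"
  shows "3/2 * (x - 1)\<^sup>2 / (x + 2) \<le> x * ln x - x + 1"
proof -
  define f where "f z = (z * ln z - z + 1) * (2*z + 4) - 3 * (z - 1)\<^sup>2" for z :: real
  define f' where "f' z = (4*z + 4) * ln z - 8*z + 8" for z :: real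
  have f_deriv: "DERIV f z :> f' z" if "z > 0" for z
    unfolding f_def f'_def using that
    by (auto intro!: derivative_eq_intros simp: field_simps power2_eq_square)
  have f'_deriv: "DERIV f' z :> 4 * (ln z + 1/z - 1)" if "z > 0" for z
    unfolding f'_def using that by (auto intro!: derivative_eq_intros simp: field_simps)
  have f''_nonneg: "ln z + 1/z - 1 \<ge> 0" if "z > 0" for z :: real
    using ln_le_minus_one[of "1/z"] that by (simp add: ln_div)
  have f'_mono: "f' u \<le> f' v" if "0 < u" "u \<le> v" for u v
    using DERIV_nonneg_imp_nondecreasing[OF \<open>u \<le> v\<close>] f'_deriv f''_nonneg that
    by (metis less_le_trans mult_nonneg_nonneg zero_le_numeral)
  have "f' 1 = 0" and "f 1 = 0"
    by (simp_all add: f'_def f_def)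
  then have "f x \<ge> f 1"
  proof (cases "x \<le> 1")
    case True
    show ?thesis
    proof (cases "x = 0")
      case False
      with assms True show ?thesis
        using DERIV_nonpos_imp_nonincreasing[OF True] f_deriv f'_mono \<open>f' 1 = 0\<close>
        by (metis less_eq_real_def less_le_trans)
    qed (simp add: f_def)
  next
    case False
    then show ?thesis
      using DERIV_nonneg_imp_nondecreasing[of 1 x f] f_deriv f'_mono \<open>f' 1 = 0\<close>
      by (metis less_le_trans linorder_not_le order_less_imp_le zero_less_one)
  qed
  then show ?thesis
    using assms \<open>f 1 = 0\<close> by (simp add: f_def field_simps)
qed

lemma KL_term_lower_bound:
  fixes p q :: real
  assumes "p \<ge> 0" and "q > 0"
  shows "3/2 * (p - q)\<^sup>2 / (p + 2 * q) \<le> p * ln (p / q) - p + q"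
proof -
  have "p / q - 1 = (p - q) / q" and "p / q + 2 = (p + 2 * q) / q"
    using assms by (simp_all add: field_simps)
  then have "3/2 * (p - q)\<^sup>2 / (p + 2 * q) = q * (3/2 * (p / q - 1)\<^sup>2 / (p / q + 2))"
    using assms by (simp add: power_divide power2_eq_square)
  also have "\<dots> \<le> q * (p / q * ln (p / q) - p / q + 1)"
    using xlnx_quadratic_lower_bound[of "p / q"] assms by (intro mult_left_mono) auto
  also have "\<dots> = p * ln (p / q) - p + q"
    using assms by (simp add: field_simps)
  finally show ?thesis .
qed

text \<open>Cauchy--Schwarz with weights \<open>p i + 2 q i\<close>, whose total is \<open>3\<close>, sums the termwise
  bound into Pinsker's inequality.\<close>

lemma Pinsker_KL:
  assumes p: "p \<in> simplex n" and q: "q \<in> simplex n" and q_pos: "\<forall>i<n. q i > 0"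
  shows "(\<Sum>i<n. \<bar>p i - q i\<bar>)\<^sup>2 \<le> 2 * KL n p q"
proof -
  have p_nonneg: "\<And>i. i < n \<Longrightarrow> p i \<ge> 0" and p_sum: "(\<Sum>i<n. p i) = 1"
    and q_sum: "(\<Sum>i<n. q i) = 1"
    using p q by (auto simp: simplex_def)
  define r where "r i = (p i - q i)\<^sup>2 / (p i + 2 * q i)" for i
  have "(\<Sum>i<n. \<bar>p i - q i\<bar>)\<^sup>2 \<le> (\<Sum>i<n. p i + 2 * q i) * (\<Sum>i<n. \<bar>p i - q i\<bar>\<^sup>2 / (p i + 2 * q i))"
    using p_nonneg q_pos by (intro Cauchy_Schwarz_weighted_sum) (smt (verit) lessThan_iff)+
  also have "\<dots> = 3 * (\<Sum>i<n. r i)"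
    by (simp add: r_def sum.distrib p_sum q_sum flip: sum_distrib_left)
  also have "\<dots> = 2 * (\<Sum>i<n. 3/2 * r i)"
    by (simp add: sum_distrib_left)
  also have "(\<Sum>i<n. 3/2 * r i) \<le> (\<Sum>i<n. p i * ln (p i / q i) - p i + q i)"
    using KL_term_lower_bound p_nonneg q_pos by (intro sum_mono) (simp add: r_def)
  also have "\<dots> = KL n p q"
    by (simp add: KL_def sum.distrib sum_subtractf p_sum q_sum)
  finally show ?thesis by simp
qed

lemma KL_self: "KL n q q = 0"
  unfolding KL_def by (rule sum.neutral) simp

lemma KL_nonneg:
  "p \<in> simplex n \<Longrightarrow> q \<in> simplex n \<Longrightarrow> \<forall>i<n. q i > 0 \<Longrightarrow> KL n p q \<ge> 0"
  using Pinsker_KL[of p n q] by (smt (verit) zero_le_power2)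

lemma KL_le_0_imp_eq:
  assumes p: "p \<in> simplex n" and q: "q \<in> simplex n" and "\<forall>i<n. q i > 0" and "KL n p q \<le> 0"
  shows "p = q"
proof
  fix i
  have "(\<Sum>i<n. \<bar>p i - q i\<bar>)\<^sup>2 \<le> 0"
    using Pinsker_KL[OF assms(1-3)] assms(4) by linarith
  then have "\<forall>i\<in>{..<n}. \<bar>p i - q i\<bar> = 0"
    by (subst sum_nonneg_eq_0_iff[symmetric]) auto
  with p q show "p i = q i"
    by (cases "i < n") (auto simp: simplex_def)
qed

lemma KL_unif_le_ln:
  assumes n: "n \<ge> 1" and p: "p \<in> simplex n"
  shows "KL n p (unif n) \<le> ln (real n)"
proof -
  have p_nonneg: "\<And>i. i < n \<Longrightarrow> p i \<ge> 0" and p_sum: "(\<Sum>i<n. p i) = 1"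
    using p by (auto simp: simplex_def)
  have "p i * ln (p i / unif n i) \<le> p i * ln (real n)" if i: "i < n" for i
  proof (cases "p i = 0")
    case False
    with p_nonneg i have "0 < p i" by (simp add: less_le)
    moreover have "p i \<le> 1"
      using member_le_sum[of i "{..<n}" p] p_nonneg i p_sum by auto
    ultimately show ?thesis
      using i n by (simp add: unif_def ln_div ln_mult mult_left_mono)
  qed simp
  then have "KL n p (unif n) \<le> (\<Sum>i<n. p i * ln (real n))"
    unfolding KL_def by (intro sum_mono) auto
  also have "\<dots> = ln (real n)"
    by (simp add: p_sum flip: sum_distrib_right)
  finally show ?thesis .
qed

lemma arg_min_eqI:
  fixes f :: "'a \<Rightarrow> 'b::order"
  assumes "P x" and "\<And>z. P z \<Longrightarrow> z \<noteq> x \<Longrightarrow> f x < f z"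
  shows "arg_min f P = x"
proof (rule arg_minI[where P = P and x = x])
  show "\<not> f z < f x" if "P z" for z
    using assms(2)[OF that] by (cases "z = x") (auto dest: order.asym)
  show "z = x" if "P z" and "\<forall>y. P y \<longrightarrow> \<not> f y < f z" for z
    using assms that by blast
qed (fact assms)

definition quad :: "nat \<Rightarrow> real \<Rightarrow> (nat \<Rightarrow> real) \<Rightarrow> (nat \<Rightarrow> real) \<Rightarrow> real" where
  "quad d S v w = S / 2 * (\<Sum>k<d. (w k)\<^sup>2) - (\<Sum>k<d. v k * w k)"

definition quad_center :: "nat \<Rightarrow> real \<Rightarrow> (nat \<Rightarrow> real) \<Rightarrow> nat \<Rightarrow> real" where
  "quad_center d S v = (\<lambda>k. if k < d then v k / S else 0)"

lemma quad_add: "quad d S v w + quad d S' v' w = quad d (S + S') (\<lambda>k. v k + v' k) w"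
  by (simp add: quad_def algebra_simps sum.distrib)

lemma quad_scale: "c * quad d S v w = quad d (c * S) (\<lambda>k. c * v k) w"
  by (simp add: quad_def algebra_simps sum_distrib_left)

lemma quad_eq_center_plus_sq_dist:
  assumes S: "S > 0"
  shows "quad d S v w = quad d S v (quad_center d S v) + S / 2 * (\<Sum>k<d. (w k - v k / S)\<^sup>2)"
proof -
  have "S / 2 * (w k)\<^sup>2 - v k * w k
      = (S / 2 * (v k / S)\<^sup>2 - v k * (v k / S)) + S / 2 * (w k - v k / S)\<^sup>2" for k
    using S by (simp add: field_simps power2_eq_square)
  then show ?thesis
    by (simp add: quad_def quad_center_def sum.distrib sum_distrib_left flip: sum_subtractf)
qed

lemma quad_center_le:
  "S > 0 \<Longrightarrow> quad d S v (quad_center d S v) \<le> quad d S v w"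
  using quad_eq_center_plus_sq_dist[of S d v w] by (simp add: sum_nonneg)

lemma arg_min_quad:
  assumes S: "S > 0"
  shows "arg_min (quad d S v) (\<lambda>w. w \<in> Rd d) = quad_center d S v"
proof (rule arg_min_eqI)
  show "quad_center d S v \<in> Rd d"
    by (simp add: Rd_def quad_center_def)
  fix w assume w: "w \<in> Rd d" and "w \<noteq> quad_center d S v"
  then obtain k where "k < d" and "w k \<noteq> v k / S"
    by (auto simp: Rd_def quad_center_def fun_eq_iff split: if_splits) (meson not_le)
  then have "0 < (\<Sum>k<d. (w k - v k / S)\<^sup>2)"
    by (intro sum_pos2[of _ k]) auto
  then show "quad d S v (quad_center d S v) < quad d S v w"
    using quad_eq_center_plus_sq_dist[OF S, of d v w] S by simp
qed

definition gibbs :: "nat \<Rightarrow> (nat \<Rightarrow> real) \<Rightarrow> nat \<Rightarrow> real" where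
  "gibbs n L = (\<lambda>i. if i < n then exp (- L i) / (\<Sum>j<n. exp (- L j)) else 0)"

lemma gibbs_partition_pos: "(n::nat) \<ge> 1 \<Longrightarrow> (\<Sum>j<n. exp (- L j)) > (0::real)"
  by (intro sum_pos) (auto simp: lessThan_empty_iff)

lemma gibbs_in_simplex: "n \<ge> 1 \<Longrightarrow> gibbs n L \<in> simplex n"
  using gibbs_partition_pos[of n L]
  by (auto simp: simplex_def gibbs_def simp flip: sum_divide_distrib)

lemma gibbs_pos: "n \<ge> 1 \<Longrightarrow> i < n \<Longrightarrow> gibbs n L i > 0"
  using gibbs_partition_pos[of n L] by (simp add: gibbs_def)

lemma linear_plus_KL_unif_eq:
  assumes n: "n \<ge> 1" and p: "p \<in> simplex n"
  shows "(\<Sum>i<n. p i * L i) + KL n p (unif n)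
       = KL n p (gibbs n L) - ln (\<Sum>j<n. exp (- L j)) + ln (real n)"
proof -
  define Z where "Z = (\<Sum>j<n. exp (- L j))"
  have Z: "Z > 0"
    using gibbs_partition_pos[OF n] by (simp add: Z_def)
  have p_nonneg: "\<And>i. i < n \<Longrightarrow> p i \<ge> 0" and p_sum: "(\<Sum>i<n. p i) = 1"
    using p by (auto simp: simplex_def)
  have "p i * L i + p i * ln (p i / unif n i)
      = p i * ln (p i / gibbs n L i) - p i * ln Z + p i * ln (real n)" if i: "i < n" for i
  proof (cases "p i = 0")
    case False
    with p_nonneg i have "p i > 0" by (simp add: less_le)
    with i n Z show ?thesis
      by (simp add: unif_def gibbs_def Z_def[symmetric] ln_div ln_mult algebra_simps)
  qed simp
  then have "(\<Sum>i<n. p i * L i + p i * ln (p i / unif n i))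
      = (\<Sum>i<n. p i * ln (p i / gibbs n L i) - p i * ln Z + p i * ln (real n))"
    by (intro sum.cong) auto
  then show ?thesis
    by (simp add: KL_def Z_def[symmetric] sum.distrib sum_subtractf p_sum
        flip: sum_distrib_right)
qed

lemma linear_plus_KL_unif_three_point:
  fixes L :: "nat \<Rightarrow> real" and c :: real
  assumes n: "n \<ge> 1" and p: "p \<in> simplex n"
  defines "f \<equiv> \<lambda>p. (\<Sum>i<n. p i * L i) + KL n p (unif n) - c"
  shows "f p = KL n p (gibbs n L) + f (gibbs n L)"
  using linear_plus_KL_unif_eq[OF n p, of L] linear_plus_KL_unif_eq[OF n gibbs_in_simplex[OF n], of L]
  by (simp add: f_def KL_self)

lemma arg_min_linear_plus_KL_unif:
  assumes n: "n \<ge> 1"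
  shows "arg_min (\<lambda>p. (\<Sum>i<n. p i * L i) + KL n p (unif n) - c) (\<lambda>p. p \<in> simplex n)
       = gibbs n L"
proof (rule arg_min_eqI)
  show "gibbs n L \<in> simplex n"
    using gibbs_in_simplex[OF n] .
  fix p assume p: "p \<in> simplex n" and "p \<noteq> gibbs n L"
  then have "\<not> KL n p (gibbs n L) \<le> 0"
    using KL_le_0_imp_eq gibbs_in_simplex gibbs_pos n by blast
  then show "(\<Sum>i<n. gibbs n L i * L i) + KL n (gibbs n L) (unif n) - c
      < (\<Sum>i<n. p i * L i) + KL n p (unif n) - c"
    using linear_plus_KL_unif_three_point[OF n p, of L c] by linarith
qed

definition alpha_sum :: "nat \<Rightarrow> real" where
  "alpha_sum t = (\<Sum>s\<in>{1..t}. alpha s)"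

lemma alpha_sum_Suc: "alpha_sum (Suc t) = alpha_sum t + alpha (Suc t)"
  by (simp add: alpha_sum_def)

lemma alpha_sum_eq: "alpha_sum t = real t * (real t + 1) / 2"
  by (induction t) (simp_all add: alpha_sum_def alpha_def field_simps)

lemma alpha_sum_pos: "t \<ge> 1 \<Longrightarrow> alpha_sum t > 0"
  by (simp add: alpha_sum_eq)

lemma alpha_sq_div_alpha_sum:
  assumes "t \<ge> 1"
  shows "alpha_sum t / 2 * (alpha t / alpha_sum t)\<^sup>2 = real t / (real t + 1)"
proof -
  have "real t \<noteq> 0" and "real t + 1 \<noteq> 0"
    using assms by auto
  then have ratio: "alpha t / alpha_sum t = 2 / (real t + 1)"
    by (simp add: alpha_sum_eq alpha_def divide_simps)
  have "alpha_sum t / 2 * (2 / (real t + 1))\<^sup>2 = real t / (real t + 1)"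
    using \<open>real t + 1 \<noteq> 0\<close> by (simp add: alpha_sum_eq power2_eq_square divide_simps)
  then show ?thesis
    by (simp only: ratio)
qed

lemma alpha_sum_sq_bound:
  fixes \<gamma> L :: real
  assumes "\<gamma> > 0" and "L \<ge> 0" and "4 * sqrt L / \<gamma> \<le> real T"
  shows "4 * L \<le> alpha_sum T * \<gamma>\<^sup>2 / 2"
proof -
  have "4 * sqrt L \<le> real T * \<gamma>"
    using assms by (simp add: divide_le_eq)
  then have "(4 * sqrt L)\<^sup>2 \<le> (real T * \<gamma>)\<^sup>2"
    using assms(2) by (intro power_mono) auto
  then have "16 * L \<le> (real T * \<gamma>)\<^sup>2"
    using assms(2) by (simp add: power_mult_distrib)
  moreover have "alpha_sum T * \<gamma>\<^sup>2 / 2 = (real T * \<gamma>)\<^sup>2 / 4 + real T * \<gamma>\<^sup>2 / 4"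
    by (simp add: alpha_sum_eq power2_eq_square field_simps)
  moreover have "real T * \<gamma>\<^sup>2 / 4 \<ge> 0"
    by simp
  ultimately show ?thesis
    by linarith
qed

lemma w_step_cong:
  assumes "t \<ge> 1" and "\<And>j. j < t \<Longrightarrow> P j = P' j"
  shows "w_step n d x y P t = w_step n d x y P' t"
  unfolding w_step_def using assms
  by (intro arg_cong2[where f = arg_min] ext arg_cong2[where f = "(+)"] sum.cong) auto

lemma p_step_cong:
  assumes "\<And>s. s \<in> {1..t} \<Longrightarrow> W s = W' s"
  shows "p_step n d x y W t = p_step n d x y W' t"
  unfolding p_step_def using assms
  by (intro arg_cong2[where f = arg_min] ext arg_cong2[where f = "(+)"] arg_cong2[where f = "(*)"]
      sum.cong) auto

locale smooth_perceptron =
  fixes n d :: nat and x :: "nat \<Rightarrow> nat \<Rightarrow> real" and y :: "nat \<Rightarrow> real"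
  assumes n_pos: "n \<ge> 1"
    and labels: "\<forall>i<n. y i \<in> {-1, 1}"
    and x_norm: "\<forall>i<n. sqrt (\<Sum>k<d. (x i k)\<^sup>2) \<le> 1"
begin

abbreviation "W \<equiv> wseq n d x y"
abbreviation "P \<equiv> pseq n d x y"
abbreviation "G \<equiv> gfun n d x y"

lemma hist_eq_seqs:
  "(\<forall>j\<le>t. snd (hist n d x y t) j = P j) \<and> (\<forall>j\<in>{1..t}. fst (hist n d x y t) j = W j)"
proof (induction t)
  case 0
  show ?case by (simp add: pseq_def)
next
  case (Suc t)
  obtain W' P' where "hist n d x y t = (W', P')"
    by fastforce
  with Suc.IH show ?case
    by (auto simp: wseq_def pseq_def Let_def le_Suc_eq)
qed

lemma pseq_0: "P 0 = unif n"
  by (simp add: pseq_def)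

lemma wseq_eq_w_step:
  assumes "t \<ge> 1"
  shows "W t = w_step n d x y P t"
proof -
  obtain t' where t: "t = Suc t'"
    using assms by (cases t) auto
  obtain W' P' where hist: "hist n d x y t' = (W', P')"
    by fastforce
  then have "w_step n d x y P' t = w_step n d x y P t"
    using hist_eq_seqs[of t'] by (intro w_step_cong) (auto simp: t less_Suc_eq_le)
  with hist show ?thesis
    by (simp add: wseq_def t Let_def)
qed

lemma pseq_eq_p_step:
  assumes "t \<ge> 1"
  shows "P t = p_step n d x y W t"
proof -
  obtain t' where t: "t = Suc t'"
    using assms by (cases t) auto
  have "P t = p_step n d x y (fst (hist n d x y t)) t"
    by (simp add: pseq_def t Let_def split: prod.splits)
  also have "\<dots> = p_step n d x y W t"
    using hist_eq_seqs[of t] by (intro p_step_cong) auto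
  finally show ?thesis .
qed

definition At :: "(nat \<Rightarrow> real) \<Rightarrow> nat \<Rightarrow> real" where
  "At c k = (\<Sum>i<n. c i * y i * x i k)"

lemma neg_gfun_eq_quad: "- G w p = quad d 1 (At p) w"
proof -
  have "(\<Sum>i<n. p i * Amul d x y w i) = (\<Sum>k<d. At p k * w k)"
    unfolding Amul_def At_def
    by (simp add: sum_distrib_left sum_distrib_right mult_ac sum.swap[of _ "{..<d}"])
  then show ?thesis
    by (simp add: gfun_def quad_def)
qed

lemma At_diff: "At (\<lambda>i. p i - q i) k = At p k - At q k"
  by (simp add: At_def algebra_simps sum_subtractf)

lemma sum_sq_At_le: "(\<Sum>k<d. (At c k)\<^sup>2) \<le> (\<Sum>i<n. \<bar>c i\<bar>)\<^sup>2"
proof -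
  have y_sq: "(y i)\<^sup>2 = 1" if "i < n" for i
    using labels that by auto
  have x_sq: "(\<Sum>k<d. (x i k)\<^sup>2) \<le> 1" if "i < n" for i
    using x_norm that by simp
  have "(At c k)\<^sup>2 \<le> (\<Sum>i<n. \<bar>c i\<bar>) * (\<Sum>i<n. \<bar>c i\<bar> * (x i k)\<^sup>2)" for k
  proof -
    have "(At c k)\<^sup>2 \<le> (\<Sum>i<n. \<bar>c i\<bar>) * (\<Sum>i<n. (c i * y i * x i k)\<^sup>2 / \<bar>c i\<bar>)"
      unfolding At_def by (rule Cauchy_Schwarz_weighted_sum) auto
    also have "(\<Sum>i<n. (c i * y i * x i k)\<^sup>2 / \<bar>c i\<bar>) = (\<Sum>i<n. \<bar>c i\<bar> * (x i k)\<^sup>2)"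
    proof (intro sum.cong refl)
      fix i assume "i \<in> {..<n}"
      then have sq: "(c i * y i * x i k)\<^sup>2 = \<bar>c i\<bar>\<^sup>2 * (x i k)\<^sup>2"
        using y_sq by (simp add: power_mult_distrib)
      show "(c i * y i * x i k)\<^sup>2 / \<bar>c i\<bar> = \<bar>c i\<bar> * (x i k)\<^sup>2"
        unfolding sq by (cases "c i = 0") (simp_all add: power2_eq_square del: abs_mult_self_eq)
    qed
    finally show ?thesis .
  qed
  then have "(\<Sum>k<d. (At c k)\<^sup>2) \<le> (\<Sum>k<d. (\<Sum>i<n. \<bar>c i\<bar>) * (\<Sum>i<n. \<bar>c i\<bar> * (x i k)\<^sup>2))"
    by (intro sum_mono)
  also have "\<dots> = (\<Sum>i<n. \<bar>c i\<bar>) * (\<Sum>i<n. \<bar>c i\<bar> * (\<Sum>k<d. (x i k)\<^sup>2))"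
    by (simp add: sum_distrib_left sum.swap[of _ "{..<d}"])
  also have "\<dots> \<le> (\<Sum>i<n. \<bar>c i\<bar>) * (\<Sum>i<n. \<bar>c i\<bar>)"
    using x_sq by (intro mult_left_mono sum_mono) (auto simp: mult_left_le sum_nonneg)
  finally show ?thesis
    by (simp add: power2_eq_square)
qed

definition theta :: "nat \<Rightarrow> nat \<Rightarrow> real" where
  "theta t k = (\<Sum>s\<in>{1..t}. alpha s * At (P s) k)"

definition w_loss :: "nat \<Rightarrow> (nat \<Rightarrow> real) \<Rightarrow> real" where
  "w_loss t w = (\<Sum>s\<in>{1..t}. alpha s * - G w (P s))"

definition w_leader :: "nat \<Rightarrow> nat \<Rightarrow> real" where
  "w_leader t = quad_center d (alpha_sum t) (theta t)"

lemma w_loss_Suc: "w_loss (Suc t) w = w_loss t w + alpha (Suc t) * - G w (P (Suc t))"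
  by (simp add: w_loss_def)

lemma theta_Suc: "theta (Suc t) k = theta t k + alpha (Suc t) * At (P (Suc t)) k"
  by (simp add: theta_def)

lemma w_loss_eq_quad: "w_loss t w = quad d (alpha_sum t) (theta t) w"
proof (induction t)
  case 0
  show ?case by (simp add: w_loss_def theta_def alpha_sum_def quad_def)
next
  case (Suc t)
  then show ?case
    by (simp add: w_loss_Suc neg_gfun_eq_quad quad_scale quad_add alpha_sum_Suc theta_Suc)
qed

lemma w_loss_leader_le: "w_loss t (w_leader t) \<le> w_loss t w"
proof (cases "t = 0")
  case False
  then show ?thesis
    using quad_center_le alpha_sum_pos by (simp add: w_loss_eq_quad w_leader_def)
qed (simp add: w_loss_def)

lemma wseq_eq_quad_center:
  assumes "t \<ge> 1"
  shows "W t = quad_center d (alpha_sum t) (\<lambda>k. theta (t - 1) k + alpha t * At (P (t - 1)) k)"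
proof -
  obtain t' where t: "t = Suc t'"
    using assms by (cases t) auto
  have "w_step n d x y P t = arg_min (\<lambda>w. w_loss t' w + alpha t * - G w (P t')) (\<lambda>w. w \<in> Rd d)"
    by (simp add: w_step_def w_loss_def t atLeastLessThanSuc_atLeastAtMost)
  also have "(\<lambda>w. w_loss t' w + alpha t * - G w (P t'))
      = quad d (alpha_sum t) (\<lambda>k. theta t' k + alpha t * At (P t') k)"
    by (simp add: fun_eq_iff w_loss_eq_quad neg_gfun_eq_quad quad_scale quad_add t alpha_sum_Suc)
  finally show ?thesis
    using wseq_eq_w_step[OF assms] arg_min_quad alpha_sum_pos[OF assms] by (simp add: t)
qed

lemma w_round_regret_le:
  assumes t: "t \<ge> 1"
  shows "w_loss t (W t) - w_loss t (w_leader t) \<le> (\<Sum>i<n. \<bar>P t i - P (t - 1) i\<bar>)\<^sup>2"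
proof -
  define S where "S = alpha_sum t"
  define D where "D = At (\<lambda>i. P (t - 1) i - P t i)"
  have S: "S > 0"
    using alpha_sum_pos[OF t] by (simp add: S_def)
  have dist: "W t k - theta t k / S = alpha t / S * D k" if "k < d" for k
  proof -
    have "W t k = (theta (t - 1) k + alpha t * At (P (t - 1)) k) / S"
      using that by (simp add: wseq_eq_quad_center[OF t] quad_center_def S_def)
    moreover have "theta t k = theta (t - 1) k + alpha t * At (P t) k"
      using t theta_Suc[of "t - 1" k] by simp
    ultimately show ?thesis
      using S by (simp add: D_def At_diff field_simps)
  qed
  have "w_loss t (W t) - w_loss t (w_leader t) = S / 2 * (\<Sum>k<d. (W t k - theta t k / S)\<^sup>2)"
    using quad_eq_center_plus_sq_dist[OF S, of d "theta t" "W t"]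
    by (simp add: w_loss_eq_quad w_leader_def S_def)
  also have "\<dots> = S / 2 * (alpha t / S)\<^sup>2 * (\<Sum>k<d. (D k)\<^sup>2)"
    by (simp add: dist power_mult_distrib power_divide sum_distrib_left sum_divide_distrib mult_ac)
  also have "S / 2 * (alpha t / S)\<^sup>2 = real t / (real t + 1)"
    unfolding S_def by (rule alpha_sq_div_alpha_sum[OF t])
  also have "real t / (real t + 1) * (\<Sum>k<d. (D k)\<^sup>2) \<le> (\<Sum>k<d. (D k)\<^sup>2)"
    by (rule mult_left_le_one_le) (auto simp: sum_nonneg)
  also have "\<dots> \<le> (\<Sum>i<n. \<bar>P (t - 1) i - P t i\<bar>)\<^sup>2"
    unfolding D_def by (rule sum_sq_At_le)
  finally show ?thesis
    by (simp add: abs_minus_commute)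
qed

text \<open>Because \<open>w_loss t (W (t + 1))\<close> is at least the leader's loss \<open>w_loss t (w_leader t)\<close>,
  the regret against the final leader telescopes into the per-round regrets.\<close>

lemma played_w_loss_le:
  "(\<Sum>t\<in>{1..T}. alpha t * - G (W t) (P t)) - w_loss T (w_leader T) \<le> path_len n d x y T"
proof (induction T)
  case 0
  show ?case by (simp add: w_loss_def path_len_def)
next
  case (Suc T)
  have "alpha (Suc T) * - G (W (Suc T)) (P (Suc T)) + w_loss T (w_leader T) - w_loss (Suc T) (w_leader (Suc T))
      \<le> w_loss (Suc T) (W (Suc T)) - w_loss (Suc T) (w_leader (Suc T))"
    using w_loss_leader_le[of T "W (Suc T)"] by (simp add: w_loss_Suc)
  also have "\<dots> \<le> (\<Sum>i<n. \<bar>P (Suc T) i - P T i\<bar>)\<^sup>2"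
    using w_round_regret_le[of "Suc T"] by simp
  finally show ?case
    using Suc.IH by (simp add: path_len_def)
qed

lemma regret_w_le_path_len: "regret_w n d x y T \<le> path_len n d x y T"
proof -
  have "w_loss T (w_leader T) \<le> (INF w\<in>Rd d. w_loss T w)"
    by (rule cINF_greatest) (auto simp: Rd_def w_loss_leader_le)
  then show ?thesis
    using played_w_loss_le[of T] by (simp add: regret_w_def w_loss_def)
qed

definition p_loss :: "nat \<Rightarrow> (nat \<Rightarrow> real) \<Rightarrow> real" where
  "p_loss t p = (\<Sum>s\<in>{1..t}. alpha s * G (W s) p)"

definition p_obj :: "nat \<Rightarrow> (nat \<Rightarrow> real) \<Rightarrow> real" where
  "p_obj t p = 1/4 * p_loss t p + KL n p (unif n)"

definition lin_loss :: "nat \<Rightarrow> nat \<Rightarrow> real" where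
  "lin_loss t i = 1/4 * (\<Sum>s\<in>{1..t}. alpha s * Amul d x y (W s) i)"

definition sq_cost :: "nat \<Rightarrow> real" where
  "sq_cost t = 1/8 * (\<Sum>s\<in>{1..t}. alpha s * (\<Sum>k<d. (W s k)\<^sup>2))"

lemma p_obj_eq: "p_obj t = (\<lambda>p. (\<Sum>i<n. p i * lin_loss t i) + KL n p (unif n) - sq_cost t)"
proof
  fix p
  have "p_loss t p = (\<Sum>i<n. p i * (\<Sum>s\<in>{1..t}. alpha s * Amul d x y (W s) i))
      - (\<Sum>s\<in>{1..t}. alpha s * (1/2 * (\<Sum>k<d. (W s k)\<^sup>2)))"
    unfolding p_loss_def gfun_def right_diff_distrib sum_subtractf sum_distrib_left
    by (subst sum.swap) (simp add: mult_ac)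
  moreover have "(\<Sum>i<n. p i * lin_loss t i)
      = 1/4 * (\<Sum>i<n. p i * (\<Sum>s\<in>{1..t}. alpha s * Amul d x y (W s) i))"
    by (simp add: lin_loss_def sum_distrib_left mult_ac)
  moreover have "sq_cost t = 1/4 * (\<Sum>s\<in>{1..t}. alpha s * (1/2 * (\<Sum>k<d. (W s k)\<^sup>2)))"
    by (simp add: sq_cost_def sum_distrib_left)
  ultimately show "p_obj t p = (\<Sum>i<n. p i * lin_loss t i) + KL n p (unif n) - sq_cost t"
    by (simp add: p_obj_def algebra_simps)
qed

lemma pseq_eq_gibbs: "P t = gibbs n (lin_loss t)"
proof (cases "t = 0")
  case True
  then show ?thesis
    by (simp add: pseq_0 lin_loss_def gibbs_def unif_def fun_eq_iff)
next
  case False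
  have "p_step n d x y W t = arg_min (p_obj t) (\<lambda>p. p \<in> simplex n)"
    unfolding p_step_def p_obj_def[abs_def] p_loss_def ..
  with False have "P t = arg_min (p_obj t) (\<lambda>p. p \<in> simplex n)"
    by (simp add: pseq_eq_p_step)
  then show ?thesis
    using arg_min_linear_plus_KL_unif[OF n_pos] by (simp only: p_obj_eq)
qed

lemma pseq_in_simplex: "P t \<in> simplex n"
  using gibbs_in_simplex[OF n_pos] by (simp add: pseq_eq_gibbs)

lemma pseq_pos: "\<forall>i<n. P t i > 0"
  using gibbs_pos[OF n_pos] by (simp add: pseq_eq_gibbs)

lemma p_obj_three_point: "p \<in> simplex n \<Longrightarrow> p_obj t p = KL n p (P t) + p_obj t (P t)"
  using linear_plus_KL_unif_three_point[OF n_pos] by (simp add: p_obj_eq pseq_eq_gibbs)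

text \<open>By the three-point identity at the minimiser, each round's loss is the increase of the
  optimal objective minus \<open>4 KL(p\<^sub>t, p\<^sub>t\<^sub>-\<^sub>1)\<close>; this is the source of the negative
  path-length term in the \<open>p\<close>-regret.\<close>

lemma played_p_loss_eq:
  "(\<Sum>t\<in>{1..T}. alpha t * G (W t) (P t))
     = 4 * p_obj T (P T) - 4 * (\<Sum>t\<in>{1..T}. KL n (P t) (P (t - 1)))"
proof (induction T)
  case 0
  show ?case by (simp add: p_obj_def p_loss_def pseq_0 KL_self)
next
  case (Suc T)
  have "p_obj (Suc T) p = p_obj T p + 1/4 * (alpha (Suc T) * G (W (Suc T)) p)" for p
    by (simp add: p_obj_def p_loss_def algebra_simps)
  then show ?case
    using Suc.IH p_obj_three_point[OF pseq_in_simplex, of T "Suc T"] by simp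
qed

lemma p_loss_ge:
  assumes p: "p \<in> simplex n"
  shows "4 * p_obj T (P T) - 4 * ln (real n) \<le> p_loss T p"
proof -
  have "p_loss T p = 4 * p_obj T p - 4 * KL n p (unif n)"
    by (simp add: p_obj_def)
  also have "\<dots> = 4 * KL n p (P T) + 4 * p_obj T (P T) - 4 * KL n p (unif n)"
    using p_obj_three_point[OF p] by simp
  finally show ?thesis
    using KL_nonneg[OF p pseq_in_simplex pseq_pos, of T] KL_unif_le_ln[OF n_pos p] by linarith
qed

lemma regret_p_le: "regret_p n d x y T \<le> 4 * ln (real n) - 2 * path_len n d x y T"
proof -
  have "4 * p_obj T (P T) - 4 * ln (real n) \<le> (INF p\<in>simplex n. p_loss T p)"
    using pseq_in_simplex by (intro cINF_greatest p_loss_ge) blast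
  moreover have "path_len n d x y T \<le> 2 * (\<Sum>t\<in>{1..T}. KL n (P t) (P (t - 1)))"
    unfolding path_len_def sum_distrib_left
    by (intro sum_mono Pinsker_KL pseq_in_simplex pseq_pos)
  ultimately show ?thesis
    using played_p_loss_eq[of T] by (simp add: regret_p_def p_loss_def)
qed

lemma path_len_nonneg: "path_len n d x y T \<ge> 0"
  by (simp add: path_len_def sum_nonneg)

lemma regret_sum_eq:
  "regret_w n d x y T + regret_p n d x y T
     = - (INF w\<in>Rd d. w_loss T w) - (INF p\<in>simplex n. p_loss T p)"
  by (simp add: regret_w_def regret_p_def w_loss_def p_loss_def sum_negf)

lemma regret_sum_le: "regret_w n d x y T + regret_p n d x y T \<le> 4 * ln (real n)"
  using regret_w_le_path_len[of T] regret_p_le[of T] path_len_nonneg[of T] by linarith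

lemma gfun_comparator_ge:
  assumes p: "p \<in> simplex n" and wstar: "sqrt (\<Sum>k<d. (wstar k)\<^sup>2) = 1"
    and margin: "\<forall>i<n. \<gamma> \<le> y i * (\<Sum>k<d. x i k * wstar k)" and \<gamma>: "\<gamma> \<ge> 0"
  shows "\<gamma>\<^sup>2 / 2 \<le> G (\<lambda>k. if k < d then \<gamma> * wstar k else 0) p"
proof -
  define w where "w = (\<lambda>k. if k < d then \<gamma> * wstar k else 0)"
  have p_nonneg: "\<And>i. i < n \<Longrightarrow> p i \<ge> 0" and p_sum: "(\<Sum>i<n. p i) = 1"
    using p by (auto simp: simplex_def)
  have "(\<Sum>k<d. (w k)\<^sup>2) = \<gamma>\<^sup>2 * (\<Sum>k<d. (wstar k)\<^sup>2)"
    by (simp add: w_def power_mult_distrib sum_distrib_left)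
  also have "\<dots> = \<gamma>\<^sup>2"
    using wstar by simp
  finally have w_sq: "(\<Sum>k<d. (w k)\<^sup>2) = \<gamma>\<^sup>2" .
  have "p i * \<gamma>\<^sup>2 \<le> p i * Amul d x y w i" if "i < n" for i
  proof -
    have "Amul d x y w i = \<gamma> * (y i * (\<Sum>k<d. x i k * wstar k))"
      by (simp add: Amul_def w_def sum_distrib_left mult_ac)
    then show ?thesis
      using margin that \<gamma> p_nonneg by (simp add: power2_eq_square mult_left_mono)
  qed
  then have "\<gamma>\<^sup>2 \<le> (\<Sum>i<n. p i * Amul d x y w i)"
    using sum_mono[of "{..<n}" "\<lambda>i. p i * \<gamma>\<^sup>2"] by (simp add: p_sum flip: sum_distrib_right)
  then show ?thesis
    by (simp add: gfun_def w_sq flip: w_def)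
qed

lemma p_loss_vertex_le:
  assumes i: "i < n"
  shows "p_loss T (\<lambda>j. if j = i then 1 else 0)
      \<le> alpha_sum T * (y i * (\<Sum>k<d. x i k * wbar n d x y T k))"
proof -
  have G_vertex: "G w (\<lambda>j. if j = i then 1 else 0) = Amul d x y w i - 1/2 * (\<Sum>k<d. (w k)\<^sup>2)" for w
    using i by (simp add: gfun_def if_distrib if_distribR sum.delta)
  have wbar_eq: "(\<Sum>t\<in>{1..T}. alpha t * W t k) = alpha_sum T * wbar n d x y T k" for k
    unfolding wbar_def alpha_sum_def[symmetric] using alpha_sum_pos[of T]
    by (cases "T = 0") (simp_all add: alpha_sum_def)
  have "p_loss T (\<lambda>j. if j = i then 1 else 0) \<le> (\<Sum>t\<in>{1..T}. alpha t * Amul d x y (W t) i)"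
    unfolding p_loss_def G_vertex by (intro sum_mono mult_left_mono) (auto simp: alpha_def sum_nonneg)
  also have "\<dots> = y i * (\<Sum>k<d. x i k * (\<Sum>t\<in>{1..T}. alpha t * W t k))"
    unfolding Amul_def sum_distrib_left by (subst sum.swap) (simp add: mult_ac)
  also have "\<dots> = alpha_sum T * (y i * (\<Sum>k<d. x i k * wbar n d x y T k))"
    by (simp only: wbar_eq) (simp add: sum_distrib_left mult_ac)
  finally show ?thesis .
qed

text \<open>Both regrets together are at most \<open>4 ln n\<close>, while the comparator \<open>\<gamma> w\<^sup>*\<close> and the
  vertex \<open>e\<^sub>i\<close> force their sum to be at least \<open>A\<^sub>T (\<gamma>\<^sup>2/2 - margin\<^sub>i)\<close>, with
  \<open>A\<^sub>T = T(T+1)/2\<close>.\<close>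

lemma wbar_margin_nonneg:
  assumes wstar: "sqrt (\<Sum>k<d. (wstar k)\<^sup>2) = 1"
    and margin: "\<forall>i<n. \<gamma> \<le> y i * (\<Sum>k<d. x i k * wstar k)" and \<gamma>: "\<gamma> > 0"
    and T: "4 * sqrt (ln (real n)) / \<gamma> \<le> real T" and i: "i < n"
  shows "0 \<le> y i * (\<Sum>k<d. x i k * wbar n d x y T k)"
proof (cases "T = 0")
  case True
  then show ?thesis by (simp add: wbar_def)
next
  case False
  define M where "M = y i * (\<Sum>k<d. x i k * wbar n d x y T k)"
  have "(INF w\<in>Rd d. w_loss T w) \<le> w_loss T (\<lambda>k. if k < d then \<gamma> * wstar k else 0)"
    using w_loss_leader_le by (intro cINF_lower bdd_belowI2) (auto simp: Rd_def)
  also have "\<dots> \<le> (\<Sum>t\<in>{1..T}. alpha t * - (\<gamma>\<^sup>2 / 2))"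
    unfolding w_loss_def using gfun_comparator_ge[OF pseq_in_simplex wstar margin] \<gamma>
    by (intro sum_mono mult_left_mono) (auto simp: alpha_def)
  also have "\<dots> = - (alpha_sum T * \<gamma>\<^sup>2 / 2)"
    by (simp add: alpha_sum_def sum_distrib_right sum_negf sum_divide_distrib)
  finally have w_inf: "(INF w\<in>Rd d. w_loss T w) \<le> - (alpha_sum T * \<gamma>\<^sup>2 / 2)" .
  have "(INF p\<in>simplex n. p_loss T p) \<le> p_loss T (\<lambda>j. if j = i then 1 else 0)"
    using p_loss_ge i by (intro cINF_lower bdd_belowI2) (auto simp: simplex_def sum.delta)
  also have "\<dots> \<le> alpha_sum T * M"
    unfolding M_def by (rule p_loss_vertex_le[OF i])
  finally have "alpha_sum T * \<gamma>\<^sup>2 / 2 - alpha_sum T * M \<le> 4 * ln (real n)"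
    using w_inf regret_sum_eq[of T] regret_sum_le[of T] by linarith
  moreover have "4 * ln (real n) \<le> alpha_sum T * \<gamma>\<^sup>2 / 2"
    using alpha_sum_sq_bound[OF \<gamma> _ T] n_pos by simp
  ultimately have "0 \<le> alpha_sum T * M"
    by linarith
  then show ?thesis
    using alpha_sum_pos[of T] False by (simp add: M_def zero_le_mult_iff)
qed

end

theorem theorem3:
  shows "\<exists>C::real. C > 0 \<and>
    (\<forall>(n::nat) (d::nat) (x::nat \<Rightarrow> nat \<Rightarrow> real) (y::nat \<Rightarrow> real) (wstar::nat \<Rightarrow> real) (\<gamma>::real) (T::nat).
       n \<ge> 1
       \<and> (\<forall>i<n. y i \<in> {-1, 1})
       \<and> (\<forall>i<n. sqrt (\<Sum>k<d. (x i k)^2) \<le> 1)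
       \<and> sqrt (\<Sum>k<d. (wstar k)^2) = 1
       \<and> \<gamma> = Min ((\<lambda>i. y i * (\<Sum>k<d. x i k * wstar k)) ` {..<n})
       \<and> \<gamma> > 0
     \<longrightarrow>
       regret_w n d x y T \<le> 2 * path_len n d x y T
       \<and> regret_p n d x y T \<le> 4 * ln (real n) - 2 * path_len n d x y T
       \<and> (real T \<ge> C * sqrt (ln (real n)) / \<gamma> \<longrightarrow>
            (\<forall>i<n. y i * (\<Sum>k<d. x i k * wbar n d x y T k) \<ge> 0)))"
  (is "\<exists>C. _ \<and> (\<forall>n d x y wstar \<gamma> T. ?hyp n d x y wstar \<gamma> T \<longrightarrow> ?concl C n d x y wstar \<gamma> T)")
proof -
  have "?concl 4 n d x y wstar \<gamma> T" if hyp: "?hyp n d x y wstar \<gamma> T" for n d x y wstar \<gamma> T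
  proof -
    interpret smooth_perceptron n d x y
      using hyp by unfold_locales auto
    have margin: "\<forall>i<n. \<gamma> \<le> y i * (\<Sum>k<d. x i k * wstar k)"
      using hyp by auto
    show ?thesis
      using regret_w_le_path_len[of T] path_len_nonneg[of T] regret_p_le[of T]
        wbar_margin_nonneg[OF _ margin] hyp
      by auto
  qed
  then show ?thesis
    by (intro exI[of _ 4]) auto
qed

end
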